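(* Let $\kappa > 3/2$ and $T_\mathrm{eff} > 0$ (temperatures in energy units, Boltzmann constant $k=1$), and set $T_0 = (\kappa - 3/2)\,T_\mathrm{eff}$. Let $f_\kappa$ be the kappa electron energy distribution on $E \in (0,\infty)$, $$f^{(\kappa)}_E(E) = \frac{2}{\sqrt{\pi}}\,\frac{\Gamma(\kappa+1)}{\Gamma(\kappa-\tfrac12)}\,T_0^{-3/2}\,\sqrt{E}\,\Bigl(1+\frac{E}{T_0}\Bigr)^{-(\kappa+1)},$$ with velocity-space analogue $f^{(\kappa)}_v(E) = f^{(\kappa)}_E(E)/\sqrt{E}$. Define the radio (source-function) temperature $T_B = \langle E^{-1/2}\rangle_{f_\kappa} / f^{(\kappa)}_v(0)$, where $\langle E^{-1/2}\rangle_{f_\kappa} = \int_0^\infty E^{-1/2} f^{(\kappa)}_E(E)\,dE$. Let $T_\mathrm{EUV} > 0$ be the EUV moment-matched temperature and define the correction $\varepsilon_\mathrm{EUV}$ by $T_\mathrm{EUV} = T_\mathrm{eff}\,(1+\varepsilon_\mathrm{EUV})$. Then $$R \equiv \frac{T_\mathrm{EUV}}{T_B} = \frac{\kappa}{\kappa - 3/2}\,\bigl(1+\varepsilon_\mathrm{EUV}\bigr).$$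
   Context: The distribution $f^{(\kappa)}_E$ is a probability density on $(0,\infty)$ whose mean energy is $\langle E\rangle = \tfrac32 T_\mathrm{eff}$ for every $\kappa>3/2$ (the "mean-energy" or Dzifčáková–Dudík convention). The quantity $T_B$ is the ratio of the moment $\langle 1/v\rangle \propto \langle E^{-1/2}\rangle$ (proportional to the low-frequency free-free emissivity) to $f_v(0)$ (proportional to the low-frequency free-free absorption coefficient), normalized so that for a Maxwellian energy density $\frac{2}{\sqrt\pi}T^{-3/2}\sqrt{E}e^{-E/T}$ it returns exactly $T$. The core temperature is $T_\mathrm{core} = \frac{\kappa-3/2}{\kappa}T_\mathrm{eff}$. *)

theory Defs
  imports "HOL-Analysis.Analysis"
begin

definition kappa_T0 :: "real \<Rightarrow> real \<Rightarrow> real" where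
  "kappa_T0 \<kappa> Teff = (\<kappa> - 3/2) * Teff"

definition kappa_fE :: "real \<Rightarrow> real \<Rightarrow> real \<Rightarrow> real" where
  "kappa_fE \<kappa> Teff E =
     2 / sqrt pi * (Gamma (\<kappa> + 1) / Gamma (\<kappa> - 1/2)) * kappa_T0 \<kappa> Teff powr (-3/2)
       * sqrt E * (1 + E / kappa_T0 \<kappa> Teff) powr (-(\<kappa> + 1))"

text \<open>Velocity-space analogue f_v = f_E / sqrt E, written out explicitly so that
  f_v(0) is the (continuous) value of the formula at E = 0.\<close>
definition kappa_fv :: "real \<Rightarrow> real \<Rightarrow> real \<Rightarrow> real" where
  "kappa_fv \<kappa> Teff E =
     2 / sqrt pi * (Gamma (\<kappa> + 1) / Gamma (\<kappa> - 1/2)) * kappa_T0 \<kappa> Teff powr (-3/2)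
       * (1 + E / kappa_T0 \<kappa> Teff) powr (-(\<kappa> + 1))"

definition kappa_mom_inv_sqrt :: "real \<Rightarrow> real \<Rightarrow> real" where
  "kappa_mom_inv_sqrt \<kappa> Teff =
     (\<integral>E\<in>{0<..}. E powr (-1/2) * kappa_fE \<kappa> Teff E \<partial>lborel)"

definition radio_TB :: "real \<Rightarrow> real \<Rightarrow> real" where
  "radio_TB \<kappa> Teff = kappa_mom_inv_sqrt \<kappa> Teff / kappa_fv \<kappa> Teff 0"

end

theory Submission
  imports Defs "HOL-Real_Asymp.Real_Asymp"
begin

text \<open>The weight E^(-1/2) cancels the factor sqrt E of f_E, so the moment is the
  integral of f_v over (0, \<infinity>). As f_v(E) = f_v(0) (1 + E/T0)^(-(\<kappa>+1)) and the latter
  integrates to T0/\<kappa>, the normalisation drops out: T_B = T0/\<kappa>, the core temperature.\<close>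

lemma has_real_derivative_one_plus_div_powr:
  fixes T k x :: real
  assumes "T > 0" and "k > 0" and "1 + x / T > 0"
  shows "((\<lambda>x. -(T / k) * (1 + x / T) powr (-k)) has_real_derivative
           (1 + x / T) powr (-(k + 1))) (at x)"
proof -
  have "((\<lambda>x. 1 + x / T) has_real_derivative 1 / T) (at x)"
    using assms by (auto intro!: derivative_eq_intros)
  from DERIV_cmult[OF DERIV_fun_powr[OF this assms(3), of "-k"], of "-(T / k)"]
  have "((\<lambda>x. -(T / k) * (1 + x / T) powr (-k)) has_real_derivative
          -(T / k) * (-k * (1 + x / T) powr (-k - of_nat 1) * (1 / T))) (at x)" .
  moreover have "-(T / k) * (-k * X * (1 / T)) = X" for X
    using assms by (simp add: field_simps)
  moreover have "-k - of_nat 1 = -(k + 1)"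
    by simp
  ultimately show ?thesis
    by metis
qed

lemma set_integral_one_plus_div_powr:
  fixes k T :: real
  assumes k: "k > 0" and T: "T > 0"
  shows "(\<integral>E\<in>{0<..}. (1 + E / T) powr (-(k + 1)) \<partial>lborel) = T / k"
proof -
  define F where "F = (\<lambda>x::real. -(T / k) * (1 + x / T) powr (-k))"
  have pos: "1 + x / T > 0" if "0 < ereal x" for x
    using that T by (simp add: add_pos_pos)
  have deriv: "DERIV F x :> (1 + x / T) powr (-(k + 1))" if "0 < ereal x" for x
    unfolding F_def by (rule has_real_derivative_one_plus_div_powr[OF T k pos[OF that]])
  have cont: "isCont (\<lambda>x. (1 + x / T) powr (-(k + 1))) x" if "0 < ereal x" for x
    using T pos[OF that] by (auto intro!: continuous_intros)
  have "isCont F 0"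
    unfolding F_def using T k by (auto intro!: continuous_intros)
  then have "(F \<longlongrightarrow> F 0) (at_right 0)"
    by (simp add: isCont_def filterlim_at_split)
  then have at_0: "((F \<circ> real_of_ereal) \<longlongrightarrow> -(T / k)) (at_right 0)"
    by (simp add: F_def zero_ereal_def ereal_tendsto_simps)
  have "(F \<longlongrightarrow> 0) at_top"
    unfolding F_def using T k by real_asymp
  then have at_infinity: "((F \<circ> real_of_ereal) \<longlongrightarrow> 0) (at_left \<infinity>)"
    by (simp add: ereal_tendsto_simps)
  have "(LBINT x=0..\<infinity>. (1 + x / T) powr (-(k + 1))) = 0 - (-(T / k))"
    by (rule interval_integral_FTC_nonneg(2)[OF _ deriv cont _ at_0 at_infinity]) auto
  moreover have "einterval 0 \<infinity> = {0<..}"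
    by (auto simp: einterval_def zero_ereal_def)
  ultimately show ?thesis
    by (simp add: interval_lebesgue_integral_def zero_ereal_def)
qed

lemma kappa_fE_eq_sqrt_mult_fv: "kappa_fE \<kappa> Teff E = sqrt E * kappa_fv \<kappa> Teff E"
  unfolding kappa_fE_def kappa_fv_def by (simp only: ac_simps)

lemma kappa_fv_eq: "kappa_fv \<kappa> Teff E =
    kappa_fv \<kappa> Teff 0 * (1 + E / kappa_T0 \<kappa> Teff) powr (-(\<kappa> + 1))"
  unfolding kappa_fv_def by simp

lemma kappa_T0_pos:
  assumes "\<kappa> > 3/2" and "Teff > 0"
  shows "kappa_T0 \<kappa> Teff > 0"
  using assms unfolding kappa_T0_def by simp

lemma kappa_fv_zero_pos:
  assumes "\<kappa> > 3/2" and "Teff > 0"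
  shows "kappa_fv \<kappa> Teff 0 > 0"
  using assms unfolding kappa_fv_def kappa_T0_def by (simp add: Gamma_real_pos)

lemma kappa_mom_inv_sqrt_eq:
  assumes "\<kappa> > 3/2" and "Teff > 0"
  shows "kappa_mom_inv_sqrt \<kappa> Teff = kappa_fv \<kappa> Teff 0 * (kappa_T0 \<kappa> Teff / \<kappa>)"
proof -
  have "E powr (-1/2) * kappa_fE \<kappa> Teff E = kappa_fv \<kappa> Teff E" if "E > 0" for E :: real
  proof -
    have "E powr (-1/2) * E powr (1/2) = E powr (-1/2 + 1/2)"
      by (rule powr_add[symmetric])
    then have "E powr (-1/2) * sqrt E = 1"
      using that by (simp add: powr_half_sqrt)
    then show ?thesis
      using that by (simp add: kappa_fE_eq_sqrt_mult_fv)
  qed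
  then have "kappa_mom_inv_sqrt \<kappa> Teff = (\<integral>E\<in>{0<..}. kappa_fv \<kappa> Teff E \<partial>lborel)"
    unfolding kappa_mom_inv_sqrt_def by (intro set_lebesgue_integral_cong) auto
  also have "\<dots> = kappa_fv \<kappa> Teff 0 *
      (\<integral>E\<in>{0<..}. (1 + E / kappa_T0 \<kappa> Teff) powr (-(\<kappa> + 1)) \<partial>lborel)"
    by (subst kappa_fv_eq) (rule set_integral_mult_right)
  also have "\<dots> = kappa_fv \<kappa> Teff 0 * (kappa_T0 \<kappa> Teff / \<kappa>)"
    using set_integral_one_plus_div_powr[OF _ kappa_T0_pos[OF assms], of \<kappa>] assms(1)
    by simp
  finally show ?thesis .
qed

lemma radio_TB_eq_core_temperature:
  assumes "\<kappa> > 3/2" and "Teff > 0"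
  shows "radio_TB \<kappa> Teff = (\<kappa> - 3/2) / \<kappa> * Teff"
  using kappa_fv_zero_pos[OF assms]
  unfolding radio_TB_def kappa_mom_inv_sqrt_eq[OF assms] kappa_T0_def
  by simp

theorem corollary1:
  fixes \<kappa> Teff TEUV \<epsilon>EUV :: real
  assumes "\<kappa> > 3/2" and "Teff > 0" and "TEUV > 0"
    and "TEUV = Teff * (1 + \<epsilon>EUV)"
  shows "TEUV / radio_TB \<kappa> Teff = \<kappa> / (\<kappa> - 3/2) * (1 + \<epsilon>EUV)"
  using assms by (simp add: radio_TB_eq_core_temperature field_simps)

end
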